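(* The function $\check J$ attains its minimum on $\mathcal M_T$, i.e., the problem $\min_{(\Sigma_{\rho_0},\dots,\Sigma_{\rho_{T-1}})\in\mathcal M_T}\check J(\Sigma_{\rho_0},\dots,\Sigma_{\rho_{T-1}})$ has at least one optimal solution.
   Context: Fix integers $n,m,T\ge 1$, a scalar $\varepsilon>0$, matrices $A_k\in\mathbb R^{n\times n}$, $B_k\in\mathbb R^{n\times m}$ ($k=0,\dots,T-1$), and symmetric positive definite matrices $R_k\in\mathbb R^{m\times m}$, $\Sigma_{w_k}\in\mathbb R^{n\times n}$ ($k=0,\dots,T-1$), $F,\Sigma_{x_{\mathrm{ini}}}\in\mathbb R^{n\times n}$. Let $\mathbb S^m_{\succeq0}$ be the set of symmetric positive semidefinite $m\times m$ matrices and $\mathcal M_T=(\mathbb S^m_{\succeq 0})^T$; $\Sigma^{1/2}$ denotes the PSD square root and $|\cdot|$ the determinant. For $(\Sigma_{\rho_0},\dots,\Sigma_{\rho_{T-1}})\in\mathcal M_T$ define backwards $\Pi_T=F$ and for $k=T-1,\dots,0$: $C_k=(R_k+B_k^\top\Pi_{k+1}B_k)/\varepsilon$, $\Pi_k=A_k^\top\Pi_{k+1}A_k-\frac1\varepsilon A_k^\top\Pi_{k+1}B_k\Sigma_{\rho_k}^{1/2}(I+\Sigma_{\rho_k}^{1/2}C_k\Sigma_{\rho_k}^{1/2})^{-1}\Sigma_{\rho_k}^{1/2}B_k^\top\Pi_{k+1}A_k$, and $\Sigma_{Q_k}=\varepsilon(R_k+B_k^\top\Pi_{k+1}B_k)^{-1}$.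 Define $\check J(\Sigma_{\rho_0},\dots,\Sigma_{\rho_{T-1}})=\frac12\Big[\mathrm{Tr}(\Pi_0\Sigma_{x_{\mathrm{ini}}})+\sum_{k=0}^{T-1}\Big(\varepsilon\log\frac{|\Sigma_{\rho_k}+\Sigma_{Q_k}|}{|\Sigma_{Q_k}|}+\mathrm{Tr}(\Pi_{k+1}\Sigma_{w_k})\Big)\Big]$. *)

theory Defs
  imports "HOL-Analysis.Analysis"
begin

definition psd_mat :: "real^'a^'a \<Rightarrow> bool" where
  "psd_mat M \<longleftrightarrow> transpose M = M \<and> (\<forall>x. 0 \<le> x \<bullet> (M *v x))"

definition pd_mat :: "real^'a^'a \<Rightarrow> bool" where
  "pd_mat M \<longleftrightarrow> transpose M = M \<and> (\<forall>x. x \<noteq> 0 \<longrightarrow> 0 < x \<bullet> (M *v x))"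

definition msqrt :: "real^'a^'a \<Rightarrow> real^'a^'a" where
  "msqrt M = (THE S. psd_mat S \<and> S ** S = M)"

(* C_k = (R_k + B_k^T P B_k)/eps, where P = Pi_{k+1} *)
definition Cmat :: "real \<Rightarrow> real^'m^'m \<Rightarrow> real^'m^'n \<Rightarrow> real^'n^'n \<Rightarrow> real^'m^'m" where
  "Cmat eps Rk Bk P = (1/eps) *\<^sub>R (Rk + transpose Bk ** P ** Bk)"

(* one backward Riccati-type step: Pi_k from P = Pi_{k+1} and Sigma_rho_k = S *)
definition Pi_step :: "real \<Rightarrow> real^'n^'n \<Rightarrow> real^'m^'n \<Rightarrow> real^'m^'m \<Rightarrow> real^'m^'m
    \<Rightarrow> real^'n^'n \<Rightarrow> real^'n^'n" where
  "Pi_step eps Ak Bk Rk S P =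
     transpose Ak ** P ** Ak
     - (1/eps) *\<^sub>R (transpose Ak ** P ** Bk ** msqrt S
         ** matrix_inv (mat 1 + msqrt S ** Cmat eps Rk Bk P ** msqrt S)
         ** msqrt S ** transpose Bk ** P ** Ak)"

(* Pi_aux j = Pi_{T-j}:  Pi_aux 0 = Pi_T = F,  Pi_aux (j+1) = Pi_{T-j-1} *)
fun Pi_aux :: "real \<Rightarrow> (nat \<Rightarrow> real^'n^'n) \<Rightarrow> (nat \<Rightarrow> real^'m^'n) \<Rightarrow> (nat \<Rightarrow> real^'m^'m)
    \<Rightarrow> real^'n^'n \<Rightarrow> nat \<Rightarrow> (nat \<Rightarrow> real^'m^'m) \<Rightarrow> nat \<Rightarrow> real^'n^'n" where
  "Pi_aux eps A B R F T Srho 0 = F"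
| "Pi_aux eps A B R F T Srho (Suc j) =
     Pi_step eps (A (T - Suc j)) (B (T - Suc j)) (R (T - Suc j)) (Srho (T - Suc j))
       (Pi_aux eps A B R F T Srho j)"

definition Pi_mat where
  "Pi_mat eps A B R F T Srho k = Pi_aux eps A B R F T Srho (T - k)"

definition SigmaQ where
  "SigmaQ eps A B R F T Srho k =
     eps *\<^sub>R matrix_inv (R k + transpose (B k) ** Pi_mat eps A B R F T Srho (Suc k) ** B k)"

definition Jcheck :: "real \<Rightarrow> (nat \<Rightarrow> real^'n^'n) \<Rightarrow> (nat \<Rightarrow> real^'m^'n) \<Rightarrow> (nat \<Rightarrow> real^'m^'m)
    \<Rightarrow> real^'n^'n \<Rightarrow> (nat \<Rightarrow> real^'n^'n) \<Rightarrow> real^'n^'n \<Rightarrow> nat \<Rightarrow> (nat \<Rightarrow> real^'m^'m) \<Rightarrow> real" where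
  "Jcheck eps A B R F Sw Sx T Srho =
     (1/2) * (trace (Pi_mat eps A B R F T Srho 0 ** Sx)
       + (\<Sum>k<T. eps * ln (det (Srho k + SigmaQ eps A B R F T Srho k)
                             / det (SigmaQ eps A B R F T Srho k))
                 + trace (Pi_mat eps A B R F T Srho (Suc k) ** Sw k)))"

end

theory Submission
  imports Defs
begin

(* Writing the matrix Sigma^(1/2) (I + Sigma^(1/2) C_k Sigma^(1/2))^-1 Sigma^(1/2) of the Riccati step as
   (I + Sigma C_k)^-1 Sigma removes the square root, so every Pi_k and Sigma_Q_k, and hence J, depends
   continuously on the PSD variables Sigma_rho_j, which range over a closed set.  All terms of J are
   nonnegative.  If r > 0 bounds R_k from below, then C_k >= (r / eps) I and Sigma_Q_k = C_k^-1, so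
     |Sigma_rho + Sigma_Q| / |Sigma_Q| = |I + Sigma_rho C_k| >= 1 + tr (Sigma_rho C_k)
                                      >= 1 + (r / eps) tr Sigma_rho.
   Thus J >= (eps/2) log (1 + (r/eps) tr Sigma_rho_k), the sublevel sets of J are bounded, and a
   minimising sequence has a convergent subsequence whose limit is a minimiser. *)

subsection \<open>Quadratic forms and the spectral theorem\<close>

lemma matrix_add_rdistrib: "(A + B) ** C = A ** C + B ** (C::real^'k^'n)"
  by (simp add: vec_eq_iff matrix_matrix_mult_def sum.distrib distrib_right)

lemma matrix_diff_rdistrib: "(A - B) ** C = A ** C - B ** (C::real^'k^'n)"
  by (simp add: vec_eq_iff matrix_matrix_mult_def sum_subtractf left_diff_distrib)

lemma matrix_diff_ldistrib: "(C::real^'n^'m) ** (A - B) = C ** A - C ** B"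
  by (simp add: vec_eq_iff matrix_matrix_mult_def sum_subtractf right_diff_distrib)

lemma transpose_add: "transpose ((A::real^'n^'m) + B) = transpose A + transpose B"
  by (simp add: vec_eq_iff transpose_def)

lemma transpose_diff: "transpose ((A::real^'n^'m) - B) = transpose A - transpose B"
  by (simp add: vec_eq_iff transpose_def)

lemma inner_matrix_vector_transpose:
  fixes M :: "real^'n^'m"
  shows "x \<bullet> (M *v y) = (transpose M *v x) \<bullet> y"
  by (metis dot_lmul_matrix transpose_matrix_vector)

lemma inner_matrix_vector_symmetric:
  fixes M :: "real^'n^'n"
  assumes "transpose M = M"
  shows "x \<bullet> (M *v y) = (M *v x) \<bullet> y"
  using inner_matrix_vector_transpose[of x M y] assms by simp

lemma quadratic_form_congruence:
  fixes N :: "real^'n^'n" and A :: "real^'m^'n"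
  shows "x \<bullet> ((transpose A ** N ** A) *v x) = (A *v x) \<bullet> (N *v (A *v x))"
  by (metis inner_matrix_vector_transpose matrix_vector_mul_assoc transpose_transpose)

lemma quadratic_form_add_scaleR:
  fixes M :: "real^'n^'n"
  assumes "transpose M = M"
  shows "(x + t *\<^sub>R h) \<bullet> (M *v (x + t *\<^sub>R h))
     = x \<bullet> (M *v x) + t * (2 * (h \<bullet> (M *v x))) + t\<^sup>2 * (h \<bullet> (M *v h))"
proof -
  have "x \<bullet> (M *v h) = h \<bullet> (M *v x)"
    using inner_matrix_vector_symmetric[OF assms, of x h] by (simp add: inner_commute)
  then show ?thesis
    by (simp add: matrix_vector_right_distrib matrix_vector_mult_scaleR inner_add_left
        inner_add_right algebra_simps power2_eq_square)
qed

lemma linear_coeff_eq_0_if_quadratic_nonneg: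
  fixes a b :: real
  assumes "\<And>t. 0 \<le> t * a + t\<^sup>2 * b"
  shows "a = 0"
proof (rule ccontr)
  assume "a \<noteq> 0"
  define c where "c = \<bar>b\<bar> + 1"
  have c: "c > 0" "b < c" unfolding c_def by auto
  have "(- a / c) * a + (- a / c)\<^sup>2 * b = a\<^sup>2 * (b - c) / c\<^sup>2"
    using c by (simp add: field_simps power2_eq_square)
  also have "\<dots> < 0"
    using \<open>a \<noteq> 0\<close> c by (intro divide_neg_pos mult_pos_neg) auto
  finally show False using assms[of "- a / c"] by linarith
qed

lemma quadratic_form_maximizer_is_eigenvector:
  fixes M :: "real^'n^'n"
  assumes sym: "transpose M = M" and V: "subspace V"
    and x: "x \<in> V" "x \<bullet> x = 1" "M *v x \<in> V"
    and max: "\<And>y. y \<in> V \<Longrightarrow> y \<bullet> (M *v y) \<le> (x \<bullet> (M *v x)) * (y \<bullet> y)"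
  shows "M *v x = (x \<bullet> (M *v x)) *\<^sub>R x"
proof -
  define l where "l = x \<bullet> (M *v x)"
  have "h \<bullet> (M *v x - l *\<^sub>R x) = 0" if h: "h \<in> V" for h
  proof -
    have "0 \<le> t * (2 * (l * (h \<bullet> x) - h \<bullet> (M *v x))) + t\<^sup>2 * (l * (h \<bullet> h) - h \<bullet> (M *v h))" for t
    proof -
      have "x + t *\<^sub>R h \<in> V" using V x h by (simp add: subspace_add subspace_scale)
      from max[OF this] have "l + t * (2 * (h \<bullet> (M *v x))) + t\<^sup>2 * (h \<bullet> (M *v h))
          \<le> l * (1 + t * (2 * (h \<bullet> x)) + t\<^sup>2 * (h \<bullet> h))"
        using x(2) unfolding quadratic_form_add_scaleR[OF sym] l_def[symmetric]
        by (simp add: inner_add_left inner_add_right inner_commute algebra_simps power2_eq_square)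
      then show ?thesis by (simp add: algebra_simps)
    qed
    then have "2 * (l * (h \<bullet> x) - h \<bullet> (M *v x)) = 0"
      by (rule linear_coeff_eq_0_if_quadratic_nonneg)
    then show ?thesis by (simp add: inner_diff_right algebra_simps)
  qed
  moreover have "M *v x - l *\<^sub>R x \<in> V" using V x by (simp add: subspace_diff subspace_scale)
  ultimately show ?thesis unfolding l_def by (metis eq_iff_diff_eq_0 inner_eq_zero_iff)
qed

lemma invariant_subspace_has_unit_eigenvector:
  fixes M :: "real^'n^'n"
  assumes sym: "transpose M = M" and V: "subspace V"
    and inv: "\<And>x. x \<in> V \<Longrightarrow> M *v x \<in> V" and v: "v \<in> V" "v \<noteq> 0"
  shows "\<exists>x\<in>V. norm x = 1 \<and> M *v x = (x \<bullet> (M *v x)) *\<^sub>R x"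
proof -
  let ?K = "V \<inter> sphere 0 1"
  have "compact ?K"
    using V closed_subspace compact_sphere closed_Int_compact by blast
  moreover have "v /\<^sub>R norm v \<in> ?K"
    using v V by (simp add: subspace_scale)
  then have "?K \<noteq> {}" by blast
  moreover have "continuous_on ?K (\<lambda>x. x \<bullet> (M *v x))" by (intro continuous_intros)
  ultimately obtain x where x: "x \<in> ?K" and xmax: "\<forall>y\<in>?K. y \<bullet> (M *v y) \<le> x \<bullet> (M *v x)"
    by (blast dest: continuous_attains_sup)
  have "y \<bullet> (M *v y) \<le> (x \<bullet> (M *v x)) * (y \<bullet> y)" if "y \<in> V" for y
  proof (cases "y = 0")
    case False
    have "y /\<^sub>R norm y \<in> ?K" using \<open>y \<in> V\<close> False V by (simp add: subspace_scale)
    with xmax have "(y /\<^sub>R norm y) \<bullet> (M *v (y /\<^sub>R norm y)) \<le> x \<bullet> (M *v x)" by blast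
    then have "(y \<bullet> (M *v y)) / (norm y)\<^sup>2 \<le> x \<bullet> (M *v x)"
      by (simp add: matrix_vector_mult_scaleR power2_eq_square divide_inverse mult_ac)
    then show ?thesis using False by (simp add: divide_le_eq power2_norm_eq_inner mult.commute)
  qed simp
  then have "M *v x = (x \<bullet> (M *v x)) *\<^sub>R x"
    using x inv by (intro quadratic_form_maximizer_is_eigenvector[OF sym V]) (auto simp: dot_square_norm)
  then show ?thesis using x by auto
qed

lemma symmetric_matrix_orthonormal_eigenvectors:
  fixes M :: "real^'n^'n"
  assumes sym: "transpose M = M" and "k \<le> CARD('n)"
  shows "\<exists>E. finite E \<and> card E = k \<and> pairwise orthogonal E
           \<and> (\<forall>e\<in>E. norm e = 1 \<and> M *v e = (e \<bullet> (M *v e)) *\<^sub>R e)"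
  using \<open>k \<le> CARD('n)\<close>
proof (induction k)
  case 0
  show ?case by (intro exI[of _ "{}"]) auto
next
  case (Suc k)
  then obtain E where E: "finite E" "card E = k" "pairwise orthogonal E"
    and eig: "\<forall>e\<in>E. norm e = 1 \<and> M *v e = (e \<bullet> (M *v e)) *\<^sub>R e" by auto
  define V where "V = {v. \<forall>e\<in>E. orthogonal e v}"
  have V: "subspace V"
    unfolding V_def subspace_def by (auto intro: orthogonal_clauses)
  have "M *v v \<in> V" if "v \<in> V" for v
  proof -
    have "e \<bullet> (M *v v) = (e \<bullet> (M *v e)) * (e \<bullet> v)" if "e \<in> E" for e
      using eig that inner_matrix_vector_symmetric[OF sym, of e v] by (metis inner_scaleR_left)
    then show ?thesis using \<open>v \<in> V\<close> by (simp add: V_def orthogonal_def)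
  qed
  moreover obtain x :: "real^'n" where x: "x \<noteq> 0" "\<And>y. y \<in> span E \<Longrightarrow> orthogonal x y"
    using orthogonal_to_subspace_exists[of E] dim_le_card'[OF E(1)] E(2) Suc.prems by auto
  then have "x \<in> V" using x(2)[OF span_base] by (auto simp: V_def orthogonal_def inner_commute)
  ultimately obtain u where u: "u \<in> V" "norm u = 1" "M *v u = (u \<bullet> (M *v u)) *\<^sub>R u"
    using invariant_subspace_has_unit_eigenvector[OF sym V] x(1) by blast
  then have "u \<notin> E" by (auto simp: V_def orthogonal_def)
  moreover have "pairwise orthogonal (insert u E)"
    using E(3) u(1) by (auto simp: V_def pairwise_insert orthogonal_def inner_commute)
  ultimately show ?case
    using E eig u by (intro exI[of _ "insert u E"]) auto
qed

definition diag_mat :: "('n \<Rightarrow> real) \<Rightarrow> real^'n^'n" where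
  "diag_mat d = (\<chi> i j. if i = j then d i else 0)"

lemma eigenvector_columns_imp_matrix_mult_diag_mat:
  fixes M U :: "real^'n^'n"
  assumes "\<And>j. M *v column j U = d j *\<^sub>R column j U"
  shows "M ** U = U ** diag_mat d"
proof -
  have "(M ** U) $ i $ j = (U ** diag_mat d) $ i $ j" for i j
  proof -
    have "(M ** U) $ i $ j = (M *v column j U) $ i"
      by (simp add: matrix_matrix_mult_def matrix_vector_mult_def column_def)
    also have "\<dots> = U $ i $ j * d j"
      using assms[of j] by (simp add: column_def mult.commute)
    also have "\<dots> = (U ** diag_mat d) $ i $ j"
      by (simp add: matrix_matrix_mult_def diag_mat_def if_distrib[of "\<lambda>x. _ * x"] cong: if_cong)
    finally show ?thesis .
  qed
  then show ?thesis by (simp add: vec_eq_iff)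
qed

theorem symmetric_matrix_diagonalization:
  fixes M :: "real^'n^'n"
  assumes sym: "transpose M = M"
  obtains U d where "orthogonal_matrix U" "M = U ** diag_mat d ** transpose U"
proof -
  obtain E where E: "finite E" "card E = CARD('n)" "pairwise orthogonal E"
    and eig: "\<forall>e\<in>E. norm e = 1 \<and> M *v e = (e \<bullet> (M *v e)) *\<^sub>R e"
    using symmetric_matrix_orthonormal_eigenvectors[OF sym order_refl] by blast
  obtain \<phi> :: "'n \<Rightarrow> real^'n" where \<phi>: "bij_betw \<phi> UNIV E"
    using finite_same_card_bij[of "UNIV :: 'n set" E] E by auto
  define U :: "real^'n^'n" where "U = (\<chi> i j. \<phi> j $ i)"
  define d where "d j = \<phi> j \<bullet> (M *v \<phi> j)" for j
  have col: "column j U = \<phi> j" for j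
    by (simp add: U_def column_def vec_eq_iff)
  have \<phi>E: "\<phi> j \<in> E" for j using \<phi> by (auto simp: bij_betw_def)
  have U: "orthogonal_matrix U"
    unfolding orthogonal_matrix_orthonormal_columns col
  proof (intro conjI allI impI)
    show "norm (\<phi> i) = 1" for i using eig \<phi>E by blast
    show "orthogonal (\<phi> i) (\<phi> j)" if "i \<noteq> j" for i j
      using E(3) \<phi>E that \<phi> unfolding pairwise_def bij_betw_def inj_on_def by blast
  qed
  have "M *v column j U = d j *\<^sub>R column j U" for j
    using eig \<phi>E[of j] unfolding col d_def by blast
  then have MU: "M ** U = U ** diag_mat d" by (rule eigenvector_columns_imp_matrix_mult_diag_mat)
  have "M = M ** (U ** transpose U)"
    using U by (simp add: orthogonal_matrix_def)
  also have "\<dots> = U ** diag_mat d ** transpose U"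
    by (simp add: matrix_mul_assoc MU)
  finally have "M = U ** diag_mat d ** transpose U" .
  with U show thesis by (rule that)
qed

lemma diag_mat_mult: "diag_mat a ** diag_mat b = diag_mat (\<lambda>i. a i * b i)"
  by (simp add: vec_eq_iff matrix_matrix_mult_def diag_mat_def if_distrib[of "\<lambda>x. x * _"] sum.delta
      cong: if_cong)

lemma quadratic_form_diag_mat: "x \<bullet> (diag_mat d *v x) = (\<Sum>i\<in>UNIV. d i * (x $ i)\<^sup>2)"
  by (simp add: inner_vec_def matrix_vector_mult_def diag_mat_def if_distrib[of "\<lambda>x. x * _"]
      if_distrib[of "\<lambda>y. _ * y"] sum.delta power2_eq_square algebra_simps cong: if_cong)

lemma quadratic_form_axis: "axis i 1 \<bullet> ((S::real^'n^'n) *v axis j 1) = S $ i $ j"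
  by (simp add: inner_vec_def matrix_vector_mult_def axis_def if_distrib[of "\<lambda>x. _ * x"]
      if_distrib[of "\<lambda>x. x * _"] sum.delta cong: if_cong)

lemma diagonalization_column_eigenvector:
  fixes U :: "real^'n^'n"
  assumes "orthogonal_matrix U" "M = U ** diag_mat d ** transpose U"
  shows "M *v column j U = d j *\<^sub>R column j U"
proof -
  have "M ** U = U ** diag_mat d"
    using assms by (simp add: orthogonal_matrix_def flip: matrix_mul_assoc)
  then have "(M ** U) $ i $ j = d j * U $ i $ j" for i
    by (simp add: matrix_matrix_mult_def diag_mat_def if_distrib[of "\<lambda>x. _ * x"] cong: if_cong)
  then show ?thesis
    by (simp add: vec_eq_iff column_def matrix_matrix_mult_def matrix_vector_mult_def)
qed

subsection \<open>Positive (semi)definite matrices\<close>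

lemma psd_mat_symmetric: "psd_mat M \<Longrightarrow> transpose M = M"
  by (simp add: psd_mat_def)

lemma pd_imp_psd_mat: "pd_mat M \<Longrightarrow> psd_mat M"
  unfolding pd_mat_def psd_mat_def by (metis inner_zero_left order_refl less_imp_le)

lemma psd_mat_zero: "psd_mat (0::real^'n^'n)"
  by (simp add: psd_mat_def vec_eq_iff transpose_def)

lemma psd_mat_congruence:
  fixes N :: "real^'n^'n" and A :: "real^'m^'n"
  assumes "psd_mat N"
  shows "psd_mat (transpose A ** N ** A)"
  using assms
  by (simp add: psd_mat_def quadratic_form_congruence matrix_transpose_mul matrix_mul_assoc)

lemma psd_mat_diag_mat: "(\<And>i. 0 \<le> d i) \<Longrightarrow> psd_mat (diag_mat d)"
  unfolding psd_mat_def quadratic_form_diag_mat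
  by (auto intro: sum_nonneg simp: vec_eq_iff transpose_def diag_mat_def)

lemma psd_mat_diagonal_nonneg: "psd_mat N \<Longrightarrow> 0 \<le> N $ i $ i"
  by (metis psd_mat_def quadratic_form_axis)

lemma psd_mat_diagonalization:
  fixes M :: "real^'n^'n"
  assumes "psd_mat M"
  obtains U d where "orthogonal_matrix U" "M = U ** diag_mat d ** transpose U" "\<And>i. 0 \<le> d i"
proof -
  obtain U d where U: "orthogonal_matrix U" and M: "M = U ** diag_mat d ** transpose U"
    using symmetric_matrix_diagonalization psd_mat_symmetric[OF assms] by blast
  have "transpose U ** M ** U = (transpose U ** U) ** diag_mat d ** (transpose U ** U)"
    by (simp add: M matrix_mul_assoc)
  then have "diag_mat d = transpose U ** M ** U"
    using U by (simp add: orthogonal_matrix_def)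
  then have "psd_mat (diag_mat d)"
    using psd_mat_congruence[OF assms] by simp
  then have "0 \<le> d i" for i
    using psd_mat_diagonal_nonneg by (fastforce simp: diag_mat_def)
  with U M show thesis by (rule that)
qed

lemma psd_mat_sqrt_exists:
  fixes M :: "real^'n^'n"
  assumes "psd_mat M"
  shows "\<exists>L. psd_mat L \<and> L ** L = M"
proof -
  obtain U d where U: "orthogonal_matrix U" and M: "M = U ** diag_mat d ** transpose U"
    and d: "\<And>i. 0 \<le> d i"
    using psd_mat_diagonalization[OF assms] by blast
  define L where "L = U ** diag_mat (\<lambda>i. sqrt (d i)) ** transpose U"
  have "psd_mat L"
    using psd_mat_congruence[OF psd_mat_diag_mat, of "\<lambda>i. sqrt (d i)" "transpose U"] d
    by (simp add: L_def)
  moreover have "L ** L = U ** (diag_mat (\<lambda>i. sqrt (d i)) ** diag_mat (\<lambda>i. sqrt (d i))) ** transpose U"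
    using U by (simp add: L_def orthogonal_matrix_def matrix_mul_assoc)
      (metis matrix_mul_assoc matrix_mul_rid)
  then have "L ** L = M"
    using d by (simp add: M diag_mat_mult flip: real_sqrt_mult)
  ultimately show ?thesis by blast
qed

lemma psd_quadratic_form_eq_0_imp:
  assumes "psd_mat S" "v \<bullet> (S *v v) = 0"
  shows "S *v v = 0"
proof -
  have "0 \<le> t * (2 * ((S *v v) \<bullet> (S *v v))) + t\<^sup>2 * ((S *v v) \<bullet> (S *v (S *v v)))" for t
    using assms quadratic_form_add_scaleR[OF psd_mat_symmetric[OF assms(1)], of v t "S *v v"]
    unfolding psd_mat_def by (metis add_0)
  from linear_coeff_eq_0_if_quadratic_nonneg[OF this] show ?thesis by simp
qed

lemma psd_mat_sqrt_unique:
  fixes S S' :: "real^'n^'n"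
  assumes S: "psd_mat S" and S': "psd_mat S'" and eq: "S ** S = S' ** S'"
  shows "S = S'"
proof -
  define D where "D = S - S'"
  \<comment> \<open>For an eigenvector \<open>v\<close> of \<open>D\<close> with eigenvalue \<open>\<mu>\<close>,
    \<open>0 = v \<bullet> (S D + D S') v = \<mu> (v \<bullet> S v + v \<bullet> S' v)\<close>, which forces \<open>\<mu> = 0\<close>.\<close>
  have symD: "transpose D = D"
    using S S' by (simp add: D_def transpose_diff psd_mat_def)
  obtain U \<mu> where U: "orthogonal_matrix U" and D: "D = U ** diag_mat \<mu> ** transpose U"
    using symmetric_matrix_diagonalization[OF symD] by blast
  have "\<mu> j = 0" for j
  proof -
    let ?v = "column j U"
    have v: "D *v ?v = \<mu> j *\<^sub>R ?v"
      by (rule diagonalization_column_eigenvector[OF U D])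
    have "?v \<noteq> 0"
      using U unfolding orthogonal_matrix_orthonormal_columns by (metis norm_zero zero_neq_one)
    have "S ** D + D ** S' = 0"
      by (simp add: D_def eq matrix_diff_ldistrib matrix_diff_rdistrib)
    then have "0 = ?v \<bullet> (S *v (D *v ?v)) + (D *v ?v) \<bullet> (S' *v ?v)"
      by (metis inner_matrix_vector_symmetric[OF symD] matrix_vector_mult_add_rdistrib
          matrix_vector_mul_assoc matrix_vector_mult_0 inner_add_right inner_zero_right)
    then have "\<mu> j * (?v \<bullet> (S *v ?v) + ?v \<bullet> (S' *v ?v)) = 0"
      by (simp add: v matrix_vector_mult_scaleR algebra_simps)
    moreover have "0 \<le> ?v \<bullet> (S *v ?v)" "0 \<le> ?v \<bullet> (S' *v ?v)"
      using S S' unfolding psd_mat_def by auto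
    ultimately consider "\<mu> j = 0" | "?v \<bullet> (S *v ?v) = 0" "?v \<bullet> (S' *v ?v) = 0"
      by (metis add_nonneg_eq_0_iff mult_eq_0_iff)
    then show ?thesis
    proof cases
      case 2
      then have "S *v ?v = 0" "S' *v ?v = 0"
        using psd_quadratic_form_eq_0_imp S S' by blast+
      then have "D *v ?v = 0" by (simp add: D_def matrix_vector_mult_diff_rdistrib)
      then show ?thesis using v \<open>?v \<noteq> 0\<close> by simp
    qed
  qed
  then have "diag_mat \<mu> = 0" by (simp add: diag_mat_def vec_eq_iff)
  then have "D = 0" by (simp add: D)
  then show ?thesis by (simp add: D_def)
qed

lemma msqrt:
  assumes "psd_mat M"
  shows psd_mat_msqrt: "psd_mat (msqrt M)" and msqrt_mult_msqrt: "msqrt M ** msqrt M = M"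
proof -
  have "\<exists>!L. psd_mat L \<and> L ** L = M"
    using psd_mat_sqrt_exists[OF assms] psd_mat_sqrt_unique by blast
  then have "psd_mat (msqrt M) \<and> msqrt M ** msqrt M = M"
    unfolding msqrt_def by (rule theI')
  then show "psd_mat (msqrt M)" "msqrt M ** msqrt M = M" by auto
qed

lemma pd_mat_quadratic_form_lower_bound:
  fixes R :: "real^'n^'n"
  assumes "pd_mat R"
  obtains r where "r > 0" "\<And>x. r * (x \<bullet> x) \<le> x \<bullet> (R *v x)"
proof -
  have "sphere (0::real^'n) 1 \<noteq> {}"
    using norm_axis_1 by (metis mem_sphere_0 empty_iff)
  moreover have "continuous_on (sphere 0 1) (\<lambda>x. x \<bullet> (R *v x))" by (intro continuous_intros)
  ultimately obtain x0 where x0: "x0 \<in> sphere 0 1"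
    and min: "\<forall>y\<in>sphere 0 1. x0 \<bullet> (R *v x0) \<le> y \<bullet> (R *v y)"
    using compact_sphere by (blast dest: continuous_attains_inf)
  define r where "r = x0 \<bullet> (R *v x0)"
  have "x0 \<noteq> 0" using x0 by auto
  then have "r > 0" using assms unfolding pd_mat_def r_def by blast
  moreover have "r * (x \<bullet> x) \<le> x \<bullet> (R *v x)" for x
  proof (cases "x = 0")
    case False
    then have "x /\<^sub>R norm x \<in> sphere 0 1" by simp
    with min have "r \<le> (x /\<^sub>R norm x) \<bullet> (R *v (x /\<^sub>R norm x))"
      unfolding r_def by blast
    then have "r \<le> (x \<bullet> (R *v x)) / (norm x)\<^sup>2"
      by (simp add: matrix_vector_mult_scaleR power2_eq_square divide_inverse mult_ac)
    then show ?thesis using False by (simp add: le_divide_eq power2_norm_eq_inner)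
  qed simp
  ultimately show thesis by (rule that)
qed

lemma pd_mat_if_quadratic_form_ge:
  fixes C :: "real^'n^'n"
  assumes "transpose C = C" and "r > 0" and "\<And>x. r * (x \<bullet> x) \<le> x \<bullet> (C *v x)"
  shows "pd_mat C"
  unfolding pd_mat_def using assms by (metis inner_gt_zero_iff mult_pos_pos order_less_le_trans)

lemma pd_mat_scaleR:
  assumes "c > 0" and "pd_mat M"
  shows "pd_mat (c *\<^sub>R M)"
  using assms by (simp add: pd_mat_def transpose_scalar flip: scaleR_matrix_vector_assoc)

lemma pd_mat_add_congruence:
  fixes R :: "real^'m^'m" and B :: "real^'m^'n"
  assumes R: "pd_mat R" and P: "psd_mat P"
  shows "pd_mat (R + transpose B ** P ** B)"
  unfolding pd_mat_def
proof (intro conjI allI impI)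
  show "transpose (R + transpose B ** P ** B) = R + transpose B ** P ** B"
    using R P by (simp add: pd_mat_def psd_mat_def transpose_add matrix_transpose_mul matrix_mul_assoc)
  fix x :: "real^'m" assume "x \<noteq> 0"
  then have "0 < x \<bullet> (R *v x)" using R by (simp add: pd_mat_def)
  moreover have "0 \<le> (B *v x) \<bullet> (P *v (B *v x))" using P by (simp add: psd_mat_def)
  ultimately show "0 < x \<bullet> ((R + transpose B ** P ** B) *v x)"
    by (simp add: matrix_vector_mult_add_rdistrib inner_add_right quadratic_form_congruence)
qed

lemma quadratic_form_add_congruence_ge:
  fixes R :: "real^'m^'m" and B :: "real^'m^'n"
  assumes "psd_mat P" and "r * (x \<bullet> x) \<le> x \<bullet> (R *v x)"
  shows "r * (x \<bullet> x) \<le> x \<bullet> ((R + transpose B ** P ** B) *v x)"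
  using assms
  by (simp add: psd_mat_def matrix_vector_mult_add_rdistrib inner_add_right quadratic_form_congruence
      add_increasing2)

lemma matrix_inv:
  fixes A :: "real^'n^'n"
  assumes "invertible A"
  shows matrix_inv_right: "A ** matrix_inv A = mat 1"
    and matrix_inv_left: "matrix_inv A ** A = mat 1"
proof -
  have "A ** matrix_inv A = mat 1 \<and> matrix_inv A ** A = mat 1"
    using assms unfolding invertible_def matrix_inv_def by (rule someI_ex)
  then show "A ** matrix_inv A = mat 1" "matrix_inv A ** A = mat 1" by auto
qed

lemma matrix_inv_unique:
  fixes A B :: "real^'n^'n"
  assumes "A ** B = mat 1"
  shows "matrix_inv A = B"
proof -
  have "invertible A" using assms invertible_right_inverse by blast
  then have "matrix_inv A = matrix_inv A ** (A ** B)" using assms by simp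
  also have "\<dots> = B" by (simp add: matrix_mul_assoc matrix_inv_left \<open>invertible A\<close>)
  finally show ?thesis .
qed

lemma transpose_matrix_inv:
  fixes A :: "real^'n^'n"
  assumes "invertible A"
  shows "transpose (matrix_inv A) = matrix_inv (transpose A)"
  using matrix_inv_left[OF assms]
  by (metis matrix_inv_unique matrix_transpose_mul transpose_mat)

lemma invertible_if_kernel_trivial:
  fixes M :: "real^'n^'n"
  assumes "\<And>x. M *v x = 0 \<Longrightarrow> x = 0"
  shows "invertible M"
proof -
  have "inj ((*v) M)" using assms vec.inj_iff_eq_0 by blast
  then obtain B where "B ** M = mat 1" using matrix_left_invertible_injective by blast
  then show ?thesis by (metis invertible_left_inverse)
qed

lemma invertible_pd_mat: "pd_mat M \<Longrightarrow> invertible M"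
  by (metis invertible_if_kernel_trivial inner_zero_right less_irrefl pd_mat_def)

lemma invertible_mat_1_plus_psd_mult_pd:
  fixes S C :: "real^'n^'n"
  assumes S: "psd_mat S" and C: "pd_mat C"
  shows "invertible (mat 1 + S ** C)"
proof (rule invertible_if_kernel_trivial)
  fix v assume "(mat 1 + S ** C) *v v = 0"
  then have v: "v = - (S *v (C *v v))"
    by (simp add: matrix_vector_mult_add_rdistrib matrix_vector_mul_assoc eq_neg_iff_add_eq_0)
  have "v \<bullet> (C *v v) = - ((C *v v) \<bullet> (S *v (C *v v)))"
    by (subst (1) v) (simp add: inner_commute)
  also have "\<dots> \<le> 0" using S by (simp add: psd_mat_def)
  finally show "v = 0" using C by (meson pd_mat_def not_less)
qed

subsection \<open>Trace and determinant inequalities\<close>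

lemma one_plus_sum_le_prod_one_plus:
  fixes d :: "'a \<Rightarrow> real"
  assumes "finite I" "\<And>i. i \<in> I \<Longrightarrow> 0 \<le> d i"
  shows "1 + (\<Sum>i\<in>I. d i) \<le> (\<Prod>i\<in>I. 1 + d i)"
  using assms
proof (induction I rule: finite_induct)
  case (insert a I)
  have "1 + (\<Sum>i\<in>insert a I. d i) \<le> (1 + d a) * (1 + (\<Sum>i\<in>I. d i))"
    using insert by (simp add: algebra_simps sum_nonneg)
  also have "\<dots> \<le> (1 + d a) * (\<Prod>i\<in>I. 1 + d i)"
    using insert by (intro mult_left_mono) auto
  finally show ?case using insert by simp
qed simp

lemma det_orthogonal_congruence:
  fixes U X :: "real^'n^'n"
  assumes "orthogonal_matrix U"
  shows "det (U ** X ** transpose U) = det X"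
proof -
  have "det U * det (transpose U) = 1"
    using assms det_mul[of U "transpose U"] by (simp add: orthogonal_matrix_def)
  moreover have "det (U ** X ** transpose U) = det X * (det U * det (transpose U))"
    by (simp add: det_mul)
  ultimately show ?thesis by simp
qed

lemma trace_orthogonal_congruence:
  fixes U X :: "real^'n^'n"
  assumes "orthogonal_matrix U"
  shows "trace (U ** X ** transpose U) = trace X"
  using assms trace_mul_sym[of "U ** X" "transpose U"]
  by (simp add: orthogonal_matrix_def matrix_mul_assoc)

lemma det_mat_1_plus_psd_ge:
  fixes N :: "real^'n^'n"
  assumes "psd_mat N"
  shows "1 + trace N \<le> det (mat 1 + N)"
proof -
  obtain U d where U: "orthogonal_matrix U" and N: "N = U ** diag_mat d ** transpose U"
    and d: "\<And>i. 0 \<le> d i"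
    using psd_mat_diagonalization[OF assms] by blast
  have "mat 1 + diag_mat d = diag_mat (\<lambda>i. 1 + d i)"
    by (simp add: vec_eq_iff diag_mat_def mat_def)
  moreover have "mat 1 + N = U ** (mat 1 + diag_mat d) ** transpose U"
    using U by (simp add: N matrix_add_ldistrib matrix_add_rdistrib orthogonal_matrix_def)
  ultimately have "det (mat 1 + N) = (\<Prod>i\<in>UNIV. 1 + d i)"
    using U by (simp add: det_orthogonal_congruence det_diagonal diag_mat_def)
  moreover have "trace N = (\<Sum>i\<in>UNIV. d i)"
  proof -
    have "trace N = trace (diag_mat d)" using U by (simp add: N trace_orthogonal_congruence)
    then show ?thesis by (simp add: trace_def diag_mat_def)
  qed
  ultimately show ?thesis
    using one_plus_sum_le_prod_one_plus[of UNIV d] d by simp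
qed

lemma trace_psd_nonneg: "psd_mat N \<Longrightarrow> 0 \<le> trace N"
  unfolding trace_def by (intro sum_nonneg psd_mat_diagonal_nonneg)

lemma trace_mult_psd_nonneg:
  fixes P Q :: "real^'n^'n"
  assumes "psd_mat P" "psd_mat Q"
  shows "0 \<le> trace (P ** Q)"
proof -
  obtain L where L: "psd_mat L" "L ** L = Q"
    using psd_mat_sqrt_exists[OF assms(2)] by blast
  have "trace (P ** Q) = trace ((P ** L) ** L)"
    by (simp add: L(2)[symmetric] matrix_mul_assoc)
  also have "\<dots> = trace (transpose L ** P ** L)"
    using trace_mul_sym[of "P ** L" L] psd_mat_symmetric[OF L(1)] by (simp add: matrix_mul_assoc)
  finally show ?thesis using trace_psd_nonneg[OF psd_mat_congruence[OF assms(1)]] by simp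
qed

lemma trace_mult_ge:
  fixes S K :: "real^'n^'n"
  assumes "psd_mat S" and "psd_mat (K - c *\<^sub>R mat 1)"
  shows "c * trace S \<le> trace (S ** K)"
proof -
  have "S ** (c *\<^sub>R mat 1) = c *\<^sub>R S"
    by (metis matrix_mul_rid matrix_scalar_ac scalar_matrix_assoc)
  then have "trace (S ** (K - c *\<^sub>R mat 1)) = trace (S ** K) - trace (c *\<^sub>R S)"
    by (simp only: matrix_diff_ldistrib trace_sub)
  moreover have "trace (c *\<^sub>R S) = c * trace S"
    by (simp add: trace_def sum_distrib_left)
  ultimately show ?thesis using trace_mult_psd_nonneg[OF assms] by simp
qed

lemma det_mat_1_plus_mult_psd_ge:
  fixes S K :: "real^'n^'n"
  assumes S: "psd_mat S" and K: "pd_mat K"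
  shows "1 + trace (S ** K) \<le> det (mat 1 + S ** K)"
proof -
  obtain L where L: "psd_mat L" "L ** L = K"
    using psd_mat_sqrt_exists[OF pd_imp_psd_mat[OF K]] by blast
  have "det L * det L \<noteq> 0"
    using invertible_pd_mat[OF K] L(2) det_mul[of L L] by (simp add: invertible_det_nz)
  moreover have "L ** (mat 1 + S ** K) = (mat 1 + L ** S ** L) ** L"
    by (simp add: matrix_add_ldistrib matrix_add_rdistrib matrix_mul_assoc flip: L(2))
  ultimately have "det (mat 1 + S ** K) = det (mat 1 + L ** S ** L)"
    by (metis det_mul mult.commute mult_cancel_left mult_zero_left)
  moreover have "trace (L ** S ** L) = trace (S ** K)"
    using trace_mul_sym[of L "S ** L"] by (simp add: matrix_mul_assoc flip: L(2))
  moreover have "psd_mat (L ** S ** L)"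
    using psd_mat_congruence[OF S, of L] psd_mat_symmetric[OF L(1)] by simp
  ultimately show ?thesis using det_mat_1_plus_psd_ge by metis
qed

lemma det_ratio_ge:
  fixes S C :: "real^'n^'n"
  assumes eps: "eps > 0" and "transpose C = C" and r: "\<And>x. r * (x \<bullet> x) \<le> x \<bullet> (C *v x)" "r > 0"
    and S: "psd_mat S"
  shows "1 + (r / eps) * trace S \<le> det (S + eps *\<^sub>R matrix_inv C) / det (eps *\<^sub>R matrix_inv C)"
proof -
  define K where "K = (1/eps) *\<^sub>R C"
  have K_form: "x \<bullet> (K *v x) = (x \<bullet> (C *v x)) / eps" for x
    by (simp add: K_def matrix_vector_mult_scaleR flip: scaleR_matrix_vector_assoc)
  have "psd_mat (K - (r/eps) *\<^sub>R mat 1)"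
    unfolding psd_mat_def
  proof (intro conjI allI)
    show "transpose (K - (r/eps) *\<^sub>R mat 1) = K - (r/eps) *\<^sub>R mat 1"
      using assms(2) by (simp add: K_def transpose_diff transpose_scalar)
    fix x :: "real^'n"
    have "x \<bullet> ((K - (r/eps) *\<^sub>R mat 1) *v x) = (x \<bullet> (C *v x) - r * (x \<bullet> x)) / eps"
      by (simp add: K_form matrix_vector_mult_diff_rdistrib inner_diff_right diff_divide_distrib
          flip: scaleR_matrix_vector_assoc)
    then show "0 \<le> x \<bullet> ((K - (r/eps) *\<^sub>R mat 1) *v x)" using r(1)[of x] eps by simp
  qed
  have "pd_mat C" using pd_mat_if_quadratic_form_ge assms(2) r by blast
  then have "pd_mat K" using eps by (simp add: K_def pd_mat_scaleR)
  define Q where "Q = eps *\<^sub>R matrix_inv C"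
  have KQ: "K ** Q = mat 1"
    using eps invertible_pd_mat[OF \<open>pd_mat C\<close>]
    by (simp add: K_def Q_def matrix_scalar_ac matrix_inv_right flip: scalar_matrix_assoc)
  then have "det K * det Q = 1" by (metis det_I det_mul)
  then have "det Q \<noteq> 0" by auto
  have "S + Q = (mat 1 + S ** K) ** Q"
    by (simp add: matrix_add_rdistrib KQ flip: matrix_mul_assoc)
  then have "det (S + Q) / det Q = det (mat 1 + S ** K)"
    using \<open>det Q \<noteq> 0\<close> by (simp add: det_mul)
  moreover note det_mat_1_plus_mult_psd_ge[OF S \<open>pd_mat K\<close>]
  moreover note trace_mult_ge[OF S \<open>psd_mat (K - (r/eps) *\<^sub>R mat 1)\<close>]
  ultimately show ?thesis unfolding Q_def by linarith
qed

lemma abs_psd_entry_le_trace: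
  fixes S :: "real^'n^'n"
  assumes "psd_mat S"
  shows "\<bar>S $ i $ j\<bar> \<le> trace S"
proof -
  have diag: "S $ k $ k \<ge> 0" for k by (rule psd_mat_diagonal_nonneg[OF assms])
  have "\<bar>S $ i $ j\<bar> \<le> (\<Sum>k\<in>{i, j}. S $ k $ k)"
  proof (cases "i = j")
    case False
    have sym: "S $ j $ i = S $ i $ j"
      using psd_mat_symmetric[OF assms] by (metis transpose_def vec_lambda_beta)
    have "0 \<le> S$i$i + c * (2 * S$i$j) + c\<^sup>2 * S$j$j" for c
    proof -
      have "0 \<le> (axis i 1 + c *\<^sub>R axis j 1) \<bullet> (S *v (axis i 1 + c *\<^sub>R axis j 1))"
        using assms unfolding psd_mat_def by blast
      then show ?thesis
        unfolding quadratic_form_add_scaleR[OF psd_mat_symmetric[OF assms]] quadratic_form_axis sym .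
    qed
    from this[of 1] this[of "-1"] show ?thesis using False by (simp add: abs_le_iff)
  qed (simp add: diag)
  also have "\<dots> \<le> trace S"
    unfolding trace_def by (rule sum_mono2) (auto intro: diag)
  finally show ?thesis .
qed

lemma norm_matrix_le_sum_abs_entries:
  "norm (S::real^'n^'m) \<le> (\<Sum>i\<in>UNIV. \<Sum>j\<in>UNIV. \<bar>S $ i $ j\<bar>)"
proof -
  have "norm S \<le> (\<Sum>i\<in>UNIV. norm (S $ i))"
    unfolding norm_vec_def by (rule L2_set_le_sum) auto
  also have "\<dots> \<le> (\<Sum>i\<in>UNIV. \<Sum>j\<in>UNIV. \<bar>S $ i $ j\<bar>)"
    by (intro sum_mono norm_le_l1_cart)
  finally show ?thesis .
qed

lemma norm_psd_le_trace:
  fixes S :: "real^'n^'n"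
  assumes "psd_mat S"
  shows "norm S \<le> real CARD('n) * real CARD('n) * trace S"
proof -
  have "norm S \<le> (\<Sum>i\<in>UNIV. \<Sum>j\<in>UNIV. \<bar>S $ i $ j\<bar>)"
    by (rule norm_matrix_le_sum_abs_entries)
  also have "\<dots> \<le> (\<Sum>i\<in>(UNIV::'n set). \<Sum>j\<in>(UNIV::'n set). trace S)"
    by (intro sum_mono abs_psd_entry_le_trace[OF assms])
  finally show ?thesis by (simp add: algebra_simps)
qed

subsection \<open>Continuity of matrix operations\<close>

lemma tendsto_matrix_matrix_mult:
  fixes f :: "'a \<Rightarrow> real^'n^'m" and g :: "'a \<Rightarrow> real^'k^'n"
  assumes "(f \<longlongrightarrow> A) F" "(g \<longlongrightarrow> B) F"
  shows "((\<lambda>x. f x ** g x) \<longlongrightarrow> A ** B) F"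
  unfolding matrix_matrix_mult_def
  by (intro vec_tendstoI) (simp, intro tendsto_sum tendsto_mult tendsto_vec_nth assms)

lemma tendsto_matrix_vector_mult:
  fixes f :: "'a \<Rightarrow> real^'n^'m"
  assumes "(f \<longlongrightarrow> A) F" "(g \<longlongrightarrow> v) F"
  shows "((\<lambda>x. f x *v g x) \<longlongrightarrow> A *v v) F"
  unfolding matrix_vector_mult_def
  by (intro vec_tendstoI) (simp, intro tendsto_sum tendsto_mult tendsto_vec_nth assms)

lemma tendsto_transpose:
  fixes f :: "'a \<Rightarrow> real^'n^'m"
  assumes "(f \<longlongrightarrow> A) F"
  shows "((\<lambda>x. transpose (f x)) \<longlongrightarrow> transpose A) F"
  unfolding transpose_def
  by (intro vec_tendstoI) (simp, intro tendsto_vec_nth assms)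

lemma tendsto_det:
  fixes f :: "'a \<Rightarrow> real^'n^'n"
  assumes "(f \<longlongrightarrow> A) F"
  shows "((\<lambda>x. det (f x)) \<longlongrightarrow> det A) F"
  unfolding det_def
  by (intro tendsto_sum tendsto_mult tendsto_const tendsto_prod tendsto_vec_nth assms)

lemma tendsto_trace:
  fixes f :: "'a \<Rightarrow> real^'n^'n"
  assumes "(f \<longlongrightarrow> A) F"
  shows "((\<lambda>x. trace (f x)) \<longlongrightarrow> trace A) F"
  unfolding trace_def
  by (intro tendsto_sum tendsto_vec_nth assms)

lemma matrix_inv_cramer:
  fixes M :: "real^'n^'n"
  assumes "det M \<noteq> 0"
  shows "matrix_inv M = (\<chi> k j. det (\<chi> i l. if l = k then axis j 1 $ i else M $ i $ l) / det M)"
proof -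
  have "matrix_inv M $ k $ j = det (\<chi> i l. if l = k then axis j 1 $ i else M $ i $ l) / det M" for k j
  proof -
    have "M *v (matrix_inv M *v axis j 1) = axis j 1"
      using assms by (simp add: matrix_vector_mul_assoc matrix_inv_right invertible_det_nz)
    then have "(matrix_inv M *v axis j 1) $ k = det (\<chi> i l. if l = k then axis j 1 $ i else M $ i $ l) / det M"
      using cramer[OF assms] by auto
    moreover have "(matrix_inv M *v axis j 1) $ k = matrix_inv M $ k $ j"
      by (simp add: matrix_vector_mult_def axis_def if_distrib[of "\<lambda>x. _ * x"] cong: if_cong)
    ultimately show ?thesis by simp
  qed
  then show ?thesis by (simp add: vec_eq_iff)
qed

lemma tendsto_matrix_inv:
  fixes f :: "'a \<Rightarrow> real^'n^'n"
  assumes f: "(f \<longlongrightarrow> A) F" and A: "det A \<noteq> 0"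
  shows "((\<lambda>x. matrix_inv (f x)) \<longlongrightarrow> matrix_inv A) F"
proof -
  define cramer_inv :: "real^'n^'n \<Rightarrow> real^'n^'n" where
    "cramer_inv M = (\<chi> k j. det (\<chi> i l. if l = k then axis j 1 $ i else M $ i $ l) / det M)" for M
  have lim: "((\<lambda>x. cramer_inv (f x)) \<longlongrightarrow> cramer_inv A) F"
  proof -
    have "((\<lambda>x. (\<chi> i l. if l = k then axis j 1 $ i else f x $ i $ l) :: real^'n^'n)
        \<longlongrightarrow> (\<chi> i l. if l = k then axis j 1 $ i else A $ i $ l)) F" for k j
      by (intro vec_tendstoI) (auto intro: tendsto_vec_nth[OF tendsto_vec_nth[OF f]])
    then show ?thesis
      unfolding cramer_inv_def by (intro vec_tendstoI) (simp, intro tendsto_divide tendsto_det f A)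
  qed
  have "\<forall>\<^sub>F x in F. cramer_inv (f x) = matrix_inv (f x)"
    using tendsto_imp_eventually_ne[OF tendsto_det[OF f] A]
    by eventually_elim (simp add: cramer_inv_def matrix_inv_cramer)
  from Lim_transform_eventually[OF lim this] show ?thesis
    using A by (simp add: cramer_inv_def matrix_inv_cramer)
qed

lemma closed_psd_mat: "closed {M :: real^'n^'n. psd_mat M}"
proof -
  have "continuous_on UNIV (\<lambda>M :: real^'n^'n. transpose M)"
    and "continuous_on UNIV (\<lambda>M :: real^'n^'n. x \<bullet> (M *v x))" for x
    unfolding continuous_on_def
    by (auto intro!: tendsto_transpose tendsto_inner tendsto_matrix_vector_mult tendsto_ident_at)
  then show ?thesis
    unfolding psd_mat_def
    by (intro closed_Collect_conj closed_Collect_eq closed_Collect_all closed_Collect_le continuous_on_id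
        continuous_on_const)
qed

subsection \<open>Minimisers of coercive functions\<close>

lemma bounded_imp_common_convergent_subsequence:
  fixes X :: "nat \<Rightarrow> nat \<Rightarrow> 'a::heine_borel"
  assumes "\<And>k. k < T \<Longrightarrow> bounded (range (\<lambda>j. X j k))"
  obtains r Y where "strict_mono r" "\<And>k. k < T \<Longrightarrow> (\<lambda>j. X (r j) k) \<longlonglongrightarrow> Y k"
proof -
  have "\<exists>r Y. strict_mono r \<and> (\<forall>k<K. (\<lambda>j. X (r j) k) \<longlonglongrightarrow> Y k)" if "K \<le> T" for K
    using that
  proof (induction K)
    case 0
    show ?case by (intro exI[of _ id]) (auto simp: strict_mono_def)
  next
    case (Suc K)
    then obtain r Y where r: "strict_mono r" and Y: "\<forall>k<K. (\<lambda>j. X (r j) k) \<longlonglongrightarrow> Y k"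
      by auto
    have "bounded (range (\<lambda>j. X j K))" using assms Suc.prems by simp
    then have "bounded (range (\<lambda>j. X (r j) K))" by (rule bounded_subset) auto
    then obtain l r' where r': "strict_mono r'" and l: "((\<lambda>j. X (r j) K) \<circ> r') \<longlonglongrightarrow> l"
      using bounded_imp_convergent_subsequence by blast
    have "(\<lambda>j. X ((r \<circ> r') j) k) \<longlonglongrightarrow> (Y(K := l)) k" if "k < Suc K" for k
    proof (cases "k = K")
      case False
      then have "(\<lambda>j. X (r j) k) \<longlonglongrightarrow> Y k" using Y that by simp
      from LIMSEQ_subseq_LIMSEQ[OF this r'] show ?thesis using False by (simp add: o_def)
    qed (use l in \<open>simp add: o_def\<close>)
    moreover have "strict_mono (r \<circ> r')" using r r' by (rule strict_mono_o)
    ultimately show ?case by blast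
  qed
  then show thesis using that by blast
qed

theorem coercive_attains_min:
  fixes f :: "(nat \<Rightarrow> 'a::heine_borel) \<Rightarrow> real" and C :: "'a set" and T :: nat
  defines "D \<equiv> {X. \<forall>k<T. X k \<in> C}"
  assumes "closed C" and "D \<noteq> {}" and "bdd_below (f ` D)"
    and sublevel_bounded: "\<And>M k. k < T \<Longrightarrow> bounded ((\<lambda>X. X k) ` {X \<in> D. f X \<le> M})"
    and continuous: "\<And>Xs Y. (\<And>j. Xs j \<in> D) \<Longrightarrow> Y \<in> D \<Longrightarrow> (\<And>k. k < T \<Longrightarrow> (\<lambda>j. Xs j k) \<longlonglongrightarrow> Y k)
      \<Longrightarrow> (\<lambda>j. f (Xs j)) \<longlonglongrightarrow> f Y"
  shows "\<exists>X\<in>D. \<forall>Y\<in>D. f X \<le> f Y"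
proof -
  have "Inf (f ` D) \<in> closure (f ` D)"
    using assms(3,4) by (intro closure_contains_Inf) auto
  then obtain y where y: "\<And>j. y j \<in> f ` D" and y_lim: "y \<longlonglongrightarrow> Inf (f ` D)"
    unfolding closure_sequential by blast
  have "\<forall>j. \<exists>X. X \<in> D \<and> y j = f X" using y by blast
  then obtain Xs where Xs_y: "\<forall>j. Xs j \<in> D \<and> y j = f (Xs j)"
    using choice[of "\<lambda>j X. X \<in> D \<and> y j = f X"] by blast
  then have Xs: "\<And>j. Xs j \<in> D" and "y = (\<lambda>j. f (Xs j))" by auto
  with y_lim have lim: "(\<lambda>j. f (Xs j)) \<longlonglongrightarrow> Inf (f ` D)" by simp
  then have "bounded (range (\<lambda>j. f (Xs j)))" by (rule convergent_imp_bounded)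
  then obtain M where "\<forall>z\<in>range (\<lambda>j. f (Xs j)). \<bar>z\<bar> \<le> M"
    unfolding bounded_real by blast
  then have M: "\<And>j. f (Xs j) \<le> M" by (auto simp: abs_le_iff)
  have "bounded (range (\<lambda>j. Xs j k))" if "k < T" for k
    using sublevel_bounded[OF that, of M] by (rule bounded_subset) (use Xs M in auto)
  then obtain r Y where r: "strict_mono r" and Y: "\<And>k. k < T \<Longrightarrow> (\<lambda>j. Xs (r j) k) \<longlonglongrightarrow> Y k"
    using bounded_imp_common_convergent_subsequence by blast
  have "Y k \<in> C" if "k < T" for k
    by (rule closed_sequentially[OF \<open>closed C\<close> _ Y[OF that]]) (use Xs that in \<open>auto simp: D_def\<close>)
  then have "Y \<in> D" by (simp add: D_def)
  have "(\<lambda>j. f (Xs (r j))) \<longlonglongrightarrow> f Y"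
    using Xs Y \<open>Y \<in> D\<close> by (intro continuous[of "\<lambda>j. Xs (r j)"])
  moreover have "(\<lambda>j. f (Xs (r j))) \<longlonglongrightarrow> Inf (f ` D)"
    using LIMSEQ_subseq_LIMSEQ[OF lim r] by (simp add: o_def)
  ultimately have "f Y = Inf (f ` D)" by (rule LIMSEQ_unique)
  then show ?thesis
    using \<open>Y \<in> D\<close> cInf_lower[OF imageI assms(4)] by (intro bexI[of _ Y]) auto
qed

subsection \<open>The Riccati step\<close>

text \<open>For invertible \<open>S\<close>, \<open>gain C S = (S\<^sup>-\<^sup>1 + C)\<^sup>-\<^sup>1\<close>.  Unlike the symmetric form with
  \<open>msqrt S\<close> used in \<open>Pi_step\<close>, it is visibly continuous in \<open>S\<close>.\<close>

definition gain :: "real^'m^'m \<Rightarrow> real^'m^'m \<Rightarrow> real^'m^'m" where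
  "gain C S = matrix_inv (mat 1 + S ** C) ** S"

lemma mat_1_plus_mult_gain:
  assumes "psd_mat S" and "pd_mat C"
  shows "(mat 1 + S ** C) ** gain C S = S"
  using invertible_mat_1_plus_psd_mult_pd[OF assms]
  by (simp add: gain_def matrix_mul_assoc matrix_inv_right)

lemma sandwich_eq_gain:
  fixes L C :: "real^'n^'n"
  assumes L: "psd_mat L" and C: "pd_mat C"
  shows "L ** matrix_inv (mat 1 + L ** C ** L) ** L = gain C (L ** L)"
    and "invertible (mat 1 + L ** C ** L)"
proof -
  let ?X = "mat 1 + L ** C ** L" and ?Y = "mat 1 + (L ** L) ** C"
  have "psd_mat (L ** C ** L)"
    using psd_mat_congruence[OF pd_imp_psd_mat[OF C], of L] psd_mat_symmetric[OF L] by simp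
  then show invX: "invertible ?X"
    using invertible_mat_1_plus_psd_mult_pd[of _ "mat 1"] by (simp add: pd_mat_def)
  have "psd_mat (mat 1 :: real^'n^'n)" by (simp add: psd_mat_def)
  then have "psd_mat (L ** L)"
    using psd_mat_congruence[of "mat 1" L] psd_mat_symmetric[OF L] by simp
  then have invY: "invertible ?Y" using invertible_mat_1_plus_psd_mult_pd C by blast
  have "?Y ** L = L ** ?X"
    by (simp add: matrix_add_ldistrib matrix_add_rdistrib matrix_mul_assoc)
  then have "?Y ** (L ** matrix_inv ?X ** L) = L ** L"
    by (metis matrix_mul_assoc matrix_inv_right[OF invX] matrix_mul_rid)
  then have "matrix_inv ?Y ** ?Y ** (L ** matrix_inv ?X ** L) = matrix_inv ?Y ** (L ** L)"
    by (simp flip: matrix_mul_assoc)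
  then show "L ** matrix_inv ?X ** L = gain C (L ** L)"
    by (simp add: gain_def matrix_inv_left[OF invY])
qed

lemma gain_symmetric:
  assumes "psd_mat S" and "pd_mat C"
  shows "transpose (gain C S) = gain C S"
proof -
  let ?L = "msqrt S"
  let ?X = "mat 1 + ?L ** C ** ?L"
  have L: "psd_mat ?L" "?L ** ?L = S" using msqrt[OF assms(1)] by auto
  have "transpose ?L = ?L" using psd_mat_symmetric[OF L(1)] .
  moreover have "transpose C = C" using assms(2) by (simp add: pd_mat_def)
  ultimately have "transpose ?X = ?X"
    by (simp add: transpose_add matrix_transpose_mul matrix_mul_assoc)
  then have "transpose (matrix_inv ?X) = matrix_inv ?X"
    using transpose_matrix_inv[OF sandwich_eq_gain(2)[OF L(1) assms(2)]] by simp
  then have "transpose (?L ** matrix_inv ?X ** ?L) = ?L ** matrix_inv ?X ** ?L"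
    using \<open>transpose ?L = ?L\<close> by (simp only: matrix_transpose_mul matrix_mul_assoc)
  then show ?thesis using sandwich_eq_gain(1)[OF L(1) assms(2)] L(2) by simp
qed

lemma pd_mat_Cmat:
  assumes "eps > 0" and "pd_mat R" and "psd_mat P"
  shows "pd_mat (Cmat eps R B P)"
  unfolding Cmat_def using assms by (intro pd_mat_scaleR pd_mat_add_congruence) simp_all

lemma Pi_step_eq_gain:
  assumes "eps > 0" and "pd_mat Rk" and "psd_mat P" and S: "psd_mat S"
  shows "Pi_step eps Ak Bk Rk S P = transpose Ak ** P ** Ak
     - (1/eps) *\<^sub>R (transpose Ak ** P ** Bk ** gain (Cmat eps Rk Bk P) S ** transpose Bk ** P ** Ak)"
proof -
  let ?L = "msqrt S" and ?C = "Cmat eps Rk Bk P"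
  have "?L ** matrix_inv (mat 1 + ?L ** ?C ** ?L) ** ?L = gain ?C S"
    using sandwich_eq_gain(1)[OF psd_mat_msqrt[OF S] pd_mat_Cmat[OF assms(1-3)]] msqrt_mult_msqrt[OF S]
    by simp
  moreover have "transpose Ak ** P ** Bk ** ?L ** matrix_inv (mat 1 + ?L ** ?C ** ?L) ** ?L
      ** transpose Bk ** P ** Ak = transpose Ak ** P ** Bk ** (?L ** matrix_inv (mat 1 + ?L ** ?C ** ?L)
      ** ?L) ** transpose Bk ** P ** Ak"
    by (simp only: matrix_mul_assoc)
  ultimately show ?thesis unfolding Pi_step_def by simp
qed

lemma completion_of_squares:
  fixes P :: "real^'n^'n" and B :: "real^'m^'n"
  assumes "transpose P = P" and Sv: "S *v v = u"
    and v: "eps *\<^sub>R v = transpose B *v (P *v y) - (R + transpose B ** P ** B) *v u"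
  shows "y \<bullet> (P *v y) - (transpose B *v (P *v y)) \<bullet> u
    = (y - B *v u) \<bullet> (P *v (y - B *v u)) + u \<bullet> (R *v u) + eps * (v \<bullet> (S *v v))"
proof -
  define z where "z = transpose B *v (P *v y)"
  have "(B *v u) \<bullet> (P *v y) = u \<bullet> z" "y \<bullet> (P *v (B *v u)) = u \<bullet> z"
    using inner_matrix_vector_transpose[of u "transpose B" "P *v y"]
      inner_matrix_vector_symmetric[OF assms(1), of y "B *v u"]
    by (simp_all add: z_def inner_commute)
  then have "(y - B *v u) \<bullet> (P *v (y - B *v u))
      = y \<bullet> (P *v y) - 2 * (u \<bullet> z) + (B *v u) \<bullet> (P *v (B *v u))"
    by (simp add: matrix_vector_mult_diff_distrib inner_diff_left inner_diff_right)
  moreover have "eps * (v \<bullet> (S *v v)) = (eps *\<^sub>R v) \<bullet> u"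
    by (simp add: Sv)
  then have "eps * (v \<bullet> (S *v v)) = z \<bullet> u - u \<bullet> (R *v u) - (B *v u) \<bullet> (P *v (B *v u))"
    unfolding v z_def[symmetric]
    by (simp add: inner_diff_left inner_diff_right inner_add_right matrix_vector_mult_add_rdistrib
        inner_commute quadratic_form_congruence)
  ultimately show ?thesis unfolding z_def[symmetric] by (simp add: inner_commute[of u z])
qed

lemma psd_mat_riccati_difference:
  fixes P :: "real^'n^'n" and B :: "real^'m^'n"
  assumes eps: "eps > 0" and R: "pd_mat R" and P: "psd_mat P" and S: "psd_mat S"
  shows "psd_mat (P - (1/eps) *\<^sub>R (P ** B ** gain (Cmat eps R B P) S ** transpose B ** P))"
  unfolding psd_mat_def
proof (intro conjI allI)
  let ?C = "Cmat eps R B P"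
  let ?G = "gain ?C S"
  have C: "pd_mat ?C" by (rule pd_mat_Cmat[OF eps R P])
  show "transpose (P - (1/eps) *\<^sub>R (P ** B ** ?G ** transpose B ** P))
      = P - (1/eps) *\<^sub>R (P ** B ** ?G ** transpose B ** P)"
    using psd_mat_symmetric[OF P] gain_symmetric[OF S C]
    by (simp add: transpose_diff transpose_scalar matrix_transpose_mul matrix_mul_assoc)
  fix y :: "real^'n"
  \<comment> \<open>\<open>u\<close> is the minimising control for the state \<open>y\<close>; writing it as \<open>S v\<close>
    avoids inverting the possibly singular \<open>S\<close> when completing the square.\<close>
  define z where "z = transpose B *v (P *v y)"
  define w where "w = ?G *v z"
  define u where "u = (1/eps) *\<^sub>R w"
  define v where "v = (1/eps) *\<^sub>R (z - (R + transpose B ** P ** B) *v u)"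
  have "w + S *v (?C *v w) = S *v z"
    using mat_1_plus_mult_gain[OF S C] unfolding w_def
    by (metis matrix_vector_mult_add_rdistrib matrix_vector_mul_assoc matrix_vector_mul_lid)
  then have "S *v z - S *v (?C *v w) = w" by (metis add_diff_cancel_right')
  moreover have "?C *v w = (R + transpose B ** P ** B) *v u"
    by (simp add: Cmat_def u_def matrix_vector_mult_scaleR flip: scaleR_matrix_vector_assoc)
  ultimately have "S *v v = u"
    by (simp add: u_def v_def matrix_vector_mult_scaleR matrix_vector_mult_diff_distrib)
  have "y \<bullet> ((P ** B ** ?G ** transpose B ** P) *v y) = y \<bullet> (P *v (B *v w))"
    by (simp add: z_def w_def matrix_vector_mul_assoc matrix_mul_assoc)
  also have "\<dots> = (P *v y) \<bullet> (B *v w)"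
    by (rule inner_matrix_vector_symmetric[OF psd_mat_symmetric[OF P]])
  also have "\<dots> = z \<bullet> w"
    unfolding z_def by (rule inner_matrix_vector_transpose)
  finally have "y \<bullet> ((P - (1/eps) *\<^sub>R (P ** B ** ?G ** transpose B ** P)) *v y) = y \<bullet> (P *v y) - z \<bullet> u"
    by (simp add: u_def matrix_vector_mult_diff_rdistrib inner_diff_right flip: scaleR_matrix_vector_assoc)
  also have "\<dots> = (y - B *v u) \<bullet> (P *v (y - B *v u)) + u \<bullet> (R *v u) + eps * (v \<bullet> (S *v v))"
    unfolding z_def using eps psd_mat_symmetric[OF P] \<open>S *v v = u\<close>
    by (intro completion_of_squares) (simp_all add: v_def z_def)
  finally show "0 \<le> y \<bullet> ((P - (1/eps) *\<^sub>R (P ** B ** ?G ** transpose B ** P)) *v y)"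
    using P R S eps unfolding psd_mat_def pd_mat_def
    by (metis add_nonneg_nonneg inner_zero_left less_imp_le matrix_vector_mult_0_right mult_nonneg_nonneg)
qed

lemma psd_mat_Pi_step:
  assumes "eps > 0" and "pd_mat Rk" and "psd_mat P" and "psd_mat S"
  shows "psd_mat (Pi_step eps Ak Bk Rk S P)"
proof -
  have "Pi_step eps Ak Bk Rk S P = transpose Ak
      ** (P - (1/eps) *\<^sub>R (P ** Bk ** gain (Cmat eps Rk Bk P) S ** transpose Bk ** P)) ** Ak"
    using Pi_step_eq_gain[OF assms]
    by (simp add: matrix_diff_ldistrib matrix_diff_rdistrib matrix_scalar_ac scalar_matrix_assoc
        matrix_mul_assoc)
  then show ?thesis
    using psd_mat_congruence[OF psd_mat_riccati_difference[OF assms]] by simp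
qed

lemma tendsto_Pi_step:
  fixes Sf :: "'a \<Rightarrow> real^'m^'m" and Pf :: "'a \<Rightarrow> real^'n^'n"
  assumes eps: "eps > 0" and R: "pd_mat Rk"
    and Sf: "(Sf \<longlongrightarrow> S) F" "\<And>x. psd_mat (Sf x)" "psd_mat S"
    and Pf: "(Pf \<longlongrightarrow> P) F" "\<And>x. psd_mat (Pf x)" "psd_mat P"
  shows "((\<lambda>x. Pi_step eps Ak Bk Rk (Sf x) (Pf x)) \<longlongrightarrow> Pi_step eps Ak Bk Rk S P) F"
proof -
  have C: "((\<lambda>x. Cmat eps Rk Bk (Pf x)) \<longlongrightarrow> Cmat eps Rk Bk P) F"
    unfolding Cmat_def
    by (intro tendsto_scaleR tendsto_add tendsto_const tendsto_matrix_matrix_mult Pf(1))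
  have "det (mat 1 + S ** Cmat eps Rk Bk P) \<noteq> 0"
    using invertible_mat_1_plus_psd_mult_pd[OF Sf(3) pd_mat_Cmat[OF eps R Pf(3)]]
    by (simp add: invertible_det_nz)
  then have "((\<lambda>x. gain (Cmat eps Rk Bk (Pf x)) (Sf x)) \<longlongrightarrow> gain (Cmat eps Rk Bk P) S) F"
    unfolding gain_def
    by (intro tendsto_matrix_matrix_mult tendsto_matrix_inv tendsto_add tendsto_const C Sf(1))
  then show ?thesis
    unfolding Pi_step_eq_gain[OF eps R Pf(2) Sf(2)] Pi_step_eq_gain[OF eps R Pf(3) Sf(3)]
    by (intro tendsto_diff tendsto_scaleR tendsto_const tendsto_matrix_matrix_mult Pf(1))
qed

subsection \<open>The cost functional\<close>

locale riccati_data =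
  fixes eps :: real and A :: "nat \<Rightarrow> real^'n^'n" and B :: "nat \<Rightarrow> real^'m^'n"
    and R :: "nat \<Rightarrow> real^'m^'m" and F :: "real^'n^'n" and T :: nat
  assumes eps_pos: "eps > 0" and pd_R: "\<And>k. k < T \<Longrightarrow> pd_mat (R k)" and psd_F: "psd_mat F"
begin

lemma psd_mat_Pi_aux:
  assumes "\<forall>k<T. psd_mat (X k)" and "j \<le> T"
  shows "psd_mat (Pi_aux eps A B R F T X j)"
  using \<open>j \<le> T\<close>
proof (induction j)
  case (Suc j)
  then have "T - Suc j < T" by simp
  with assms(1) have "psd_mat (X (T - Suc j))" by blast
  then show ?case
    using psd_mat_Pi_step[OF eps_pos pd_R[OF \<open>T - Suc j < T\<close>] Suc.IH] Suc.prems by simp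
qed (simp add: psd_F)

lemma psd_mat_Pi_mat:
  assumes "\<forall>k<T. psd_mat (X k)"
  shows "psd_mat (Pi_mat eps A B R F T X k)"
  unfolding Pi_mat_def using assms diff_le_self by (rule psd_mat_Pi_aux)

lemma tendsto_Pi_aux:
  assumes Xs: "\<And>x. \<forall>k<T. psd_mat (Xs x k)" and Y: "\<forall>k<T. psd_mat (Y k)"
    and lim: "\<And>k. k < T \<Longrightarrow> ((\<lambda>x. Xs x k) \<longlongrightarrow> Y k) F'"
    and "j \<le> T"
  shows "((\<lambda>x. Pi_aux eps A B R F T (Xs x) j) \<longlongrightarrow> Pi_aux eps A B R F T Y j) F'"
  using \<open>j \<le> T\<close>
proof (induction j)
  case (Suc j)
  have "T - Suc j < T" using Suc.prems by simp
  with Suc show ?case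
    using tendsto_Pi_step[OF eps_pos pd_R lim _ _ Suc.IH] Xs Y psd_mat_Pi_aux[OF Xs] psd_mat_Pi_aux[OF Y]
    by simp
qed simp

lemma tendsto_Pi_mat:
  assumes "\<And>x. \<forall>k<T. psd_mat (Xs x k)" and "\<forall>k<T. psd_mat (Y k)"
    and "\<And>k. k < T \<Longrightarrow> ((\<lambda>x. Xs x k) \<longlongrightarrow> Y k) F'"
  shows "((\<lambda>x. Pi_mat eps A B R F T (Xs x) k) \<longlongrightarrow> Pi_mat eps A B R F T Y k) F'"
  unfolding Pi_mat_def using assms diff_le_self by (rule tendsto_Pi_aux)

lemma SigmaQ_det_ratio_ge:
  assumes X: "\<forall>k<T. psd_mat (X k)" and "k < T"
    and r: "r > 0" "\<And>x. r * (x \<bullet> x) \<le> x \<bullet> (R k *v x)"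
  shows "1 + (r / eps) * trace (X k)
    \<le> det (X k + SigmaQ eps A B R F T X k) / det (SigmaQ eps A B R F T X k)"
proof -
  let ?C = "R k + transpose (B k) ** Pi_mat eps A B R F T X (Suc k) ** B k"
  have P: "psd_mat (Pi_mat eps A B R F T X (Suc k))" by (rule psd_mat_Pi_mat[OF X])
  have "transpose ?C = ?C"
    using pd_mat_add_congruence[OF pd_R[OF \<open>k < T\<close>] P] by (simp add: pd_mat_def)
  moreover have "r * (x \<bullet> x) \<le> x \<bullet> (?C *v x)" for x
    by (rule quadratic_form_add_congruence_ge[OF P r(2)])
  ultimately show ?thesis
    unfolding SigmaQ_def using det_ratio_ge[OF eps_pos] r(1) X \<open>k < T\<close> by blast
qed

end

locale entropic_cost = riccati_data eps A B R F T
    for eps and A :: "nat \<Rightarrow> real^'n^'n" and B :: "nat \<Rightarrow> real^'m^'n" and R F T +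
  fixes Sw :: "nat \<Rightarrow> real^'n^'n" and Sx :: "real^'n^'n"
  assumes psd_Sw: "\<And>k. k < T \<Longrightarrow> psd_mat (Sw k)" and psd_Sx: "psd_mat Sx"
begin

abbreviation J :: "(nat \<Rightarrow> real^'m^'m) \<Rightarrow> real" where
  "J \<equiv> Jcheck eps A B R F Sw Sx T"

definition stage_cost :: "(nat \<Rightarrow> real^'m^'m) \<Rightarrow> nat \<Rightarrow> real" where
  "stage_cost X k = eps * ln (det (X k + SigmaQ eps A B R F T X k) / det (SigmaQ eps A B R F T X k))
      + trace (Pi_mat eps A B R F T X (Suc k) ** Sw k)"

lemma Jcheck_eq_stage_costs:
  "J X = (trace (Pi_mat eps A B R F T X 0 ** Sx) + (\<Sum>k<T. stage_cost X k)) / 2"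
  by (simp add: Jcheck_def stage_cost_def)

lemma stage_cost_ge_log_trace:
  assumes X: "\<forall>k<T. psd_mat (X k)" and "k < T"
    and r: "r > 0" "\<And>x. r * (x \<bullet> x) \<le> x \<bullet> (R k *v x)"
  shows "0 \<le> eps * ln (1 + (r / eps) * trace (X k))"
    and "eps * ln (1 + (r / eps) * trace (X k)) \<le> stage_cost X k"
proof -
  have "0 \<le> trace (X k)" using X \<open>k < T\<close> trace_psd_nonneg by blast
  then have "0 \<le> (r / eps) * trace (X k)" using r(1) eps_pos by simp
  then show "0 \<le> eps * ln (1 + (r / eps) * trace (X k))" using eps_pos by simp
  from \<open>0 \<le> (r / eps) * trace (X k)\<close> have "ln (1 + (r / eps) * trace (X k))
      \<le> ln (det (X k + SigmaQ eps A B R F T X k) / det (SigmaQ eps A B R F T X k))"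
    using SigmaQ_det_ratio_ge[OF X \<open>k < T\<close> r] by (subst ln_le_cancel_iff) auto
  moreover have "0 \<le> trace (Pi_mat eps A B R F T X (Suc k) ** Sw k)"
    using trace_mult_psd_nonneg[OF psd_mat_Pi_mat[OF X] psd_Sw[OF \<open>k < T\<close>]] .
  ultimately show "eps * ln (1 + (r / eps) * trace (X k)) \<le> stage_cost X k"
    using eps_pos unfolding stage_cost_def by (smt (verit) mult_left_mono)
qed

lemma stage_cost_nonneg:
  assumes X: "\<forall>k<T. psd_mat (X k)" and k: "k < T"
  shows "0 \<le> stage_cost X k"
proof -
  obtain r where "r > 0" "\<And>x. r * (x \<bullet> x) \<le> x \<bullet> (R k *v x)"
    using pd_mat_quadratic_form_lower_bound pd_R[OF k] by blast
  from stage_cost_ge_log_trace[OF X k this] show ?thesis by linarith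
qed

lemma Jcheck_nonneg:
  assumes X: "\<forall>k<T. psd_mat (X k)"
  shows "0 \<le> J X"
proof -
  have "0 \<le> (\<Sum>k<T. stage_cost X k)"
    by (rule sum_nonneg) (simp add: stage_cost_nonneg[OF X])
  then show ?thesis
    using trace_mult_psd_nonneg[OF psd_mat_Pi_mat[OF X] psd_Sx] by (simp add: Jcheck_eq_stage_costs)
qed

lemma Jcheck_ge_log_trace:
  assumes X: "\<forall>k<T. psd_mat (X k)" and "k < T"
    and r: "r > 0" "\<And>x. r * (x \<bullet> x) \<le> x \<bullet> (R k *v x)"
  shows "eps / 2 * ln (1 + (r / eps) * trace (X k)) \<le> J X"
proof -
  have "stage_cost X k \<le> (\<Sum>j<T. stage_cost X j)"
    using \<open>k < T\<close> stage_cost_nonneg[OF X] by (intro member_le_sum) auto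
  moreover have "0 \<le> trace (Pi_mat eps A B R F T X 0 ** Sx)"
    by (rule trace_mult_psd_nonneg[OF psd_mat_Pi_mat[OF X] psd_Sx])
  ultimately show ?thesis
    using stage_cost_ge_log_trace(2)[OF X \<open>k < T\<close> r] by (simp add: Jcheck_eq_stage_costs)
qed

lemma Jcheck_sublevel_bounded:
  assumes "k < T"
  shows "bounded ((\<lambda>X. X k) ` {X. (\<forall>k<T. psd_mat (X k)) \<and> J X \<le> M})"
proof -
  obtain r where r: "r > 0" "\<And>x. r * (x \<bullet> x) \<le> x \<bullet> (R k *v x)"
    using pd_mat_quadratic_form_lower_bound pd_R[OF assms] by blast
  have "norm (X k) \<le> real CARD('m) * real CARD('m) * ((exp (2 * M / eps) - 1) * eps / r)"
    if X: "\<forall>k<T. psd_mat (X k)" and "J X \<le> M" for X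
  proof -
    have psd: "psd_mat (X k)" using X assms by blast
    have "eps / 2 * ln (1 + (r / eps) * trace (X k)) \<le> M"
      using Jcheck_ge_log_trace[OF X assms r] \<open>J X \<le> M\<close> by linarith
    then have "ln (1 + (r / eps) * trace (X k)) \<le> 2 * M / eps"
      using eps_pos by (simp add: field_simps)
    moreover have "0 < 1 + (r / eps) * trace (X k)"
      using r(1) eps_pos trace_psd_nonneg[OF psd] by (simp add: add_pos_nonneg)
    ultimately have "1 + (r / eps) * trace (X k) \<le> exp (2 * M / eps)"
      by (metis exp_le_cancel_iff exp_ln)
    then have "trace (X k) \<le> (exp (2 * M / eps) - 1) * eps / r"
      using r(1) eps_pos by (simp add: field_simps)
    then show ?thesis
      using norm_psd_le_trace[OF psd] by (smt (verit) mult_left_mono of_nat_0_le_iff zero_le_mult_iff)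
  qed
  then show ?thesis unfolding bounded_iff by blast
qed

lemma tendsto_stage_cost:
  assumes Xs: "\<And>x. \<forall>k<T. psd_mat (Xs x k)" and Y: "\<forall>k<T. psd_mat (Y k)"
    and lim: "\<And>k. k < T \<Longrightarrow> ((\<lambda>x. Xs x k) \<longlongrightarrow> Y k) F'" and "k < T"
  shows "((\<lambda>x. stage_cost (Xs x) k) \<longlongrightarrow> stage_cost Y k) F'"
proof -
  note Pi_lim = tendsto_Pi_mat[OF Xs Y lim]
  have "pd_mat (R k + transpose (B k) ** Pi_mat eps A B R F T Y (Suc k) ** B k)"
    by (rule pd_mat_add_congruence[OF pd_R[OF \<open>k < T\<close>] psd_mat_Pi_mat[OF Y]])
  then have "det (R k + transpose (B k) ** Pi_mat eps A B R F T Y (Suc k) ** B k) \<noteq> 0"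
    using invertible_pd_mat invertible_det_nz by blast
  then have Q: "((\<lambda>x. SigmaQ eps A B R F T (Xs x) k) \<longlongrightarrow> SigmaQ eps A B R F T Y k) F'"
    unfolding SigmaQ_def
    by (intro tendsto_scaleR tendsto_const tendsto_matrix_inv tendsto_add tendsto_matrix_matrix_mult Pi_lim)
  obtain r where "r > 0" "\<And>x. r * (x \<bullet> x) \<le> x \<bullet> (R k *v x)"
    using pd_mat_quadratic_form_lower_bound pd_R[OF \<open>k < T\<close>] by blast
  with Y \<open>k < T\<close> have ratio: "0 < det (Y k + SigmaQ eps A B R F T Y k) / det (SigmaQ eps A B R F T Y k)"
    using SigmaQ_det_ratio_ge trace_psd_nonneg eps_pos
    by (smt (verit) divide_nonneg_pos mult_nonneg_nonneg)
  then have "det (SigmaQ eps A B R F T Y k) \<noteq> 0" by auto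
  with ratio show ?thesis
    unfolding stage_cost_def
    by (intro tendsto_add tendsto_mult tendsto_const tendsto_ln tendsto_divide tendsto_det tendsto_trace
        tendsto_matrix_matrix_mult Q Pi_lim lim \<open>k < T\<close>) auto
qed

lemma tendsto_Jcheck:
  assumes Xs: "\<And>x. \<forall>k<T. psd_mat (Xs x k)" and Y: "\<forall>k<T. psd_mat (Y k)"
    and lim: "\<And>k. k < T \<Longrightarrow> ((\<lambda>x. Xs x k) \<longlongrightarrow> Y k) F'"
  shows "((\<lambda>x. J (Xs x)) \<longlongrightarrow> J Y) F'"
proof -
  have "((\<lambda>x. \<Sum>k<T. stage_cost (Xs x) k) \<longlongrightarrow> (\<Sum>k<T. stage_cost Y k)) F'"
    by (rule tendsto_sum) (simp add: tendsto_stage_cost[OF Xs Y lim])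
  then show ?thesis
    unfolding Jcheck_eq_stage_costs
    by (intro tendsto_divide tendsto_add tendsto_trace tendsto_matrix_matrix_mult
        tendsto_Pi_mat[OF Xs Y lim] tendsto_const) auto
qed

theorem Jcheck_attains_min:
  "\<exists>X. (\<forall>k<T. psd_mat (X k)) \<and> (\<forall>Y. (\<forall>k<T. psd_mat (Y k)) \<longrightarrow> J X \<le> J Y)"
proof -
  let ?D = "{X :: nat \<Rightarrow> real^'m^'m. \<forall>k<T. X k \<in> {M. psd_mat M}}"
  have "\<exists>X\<in>?D. \<forall>Y\<in>?D. J X \<le> J Y"
  proof (rule coercive_attains_min[where f = J and C = "{M. psd_mat M}" and T = T, OF closed_psd_mat])
    have "(\<lambda>k. 0) \<in> ?D" by (simp add: psd_mat_zero)
    then show "?D \<noteq> {}" by auto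
    show "bdd_below (J ` ?D)"
      by (rule bdd_belowI2[of _ 0]) (simp add: Jcheck_nonneg)
    show "bounded ((\<lambda>X. X k) ` {X \<in> ?D. J X \<le> M})" if "k < T" for M k
      using Jcheck_sublevel_bounded[OF that, of M] by simp
    show "(\<lambda>j. J (Xs j)) \<longlonglongrightarrow> J Y"
      if "\<And>j. Xs j \<in> ?D" "Y \<in> ?D" and "\<And>k. k < T \<Longrightarrow> (\<lambda>j. Xs j k) \<longlonglongrightarrow> Y k" for Xs Y
      using that by (intro tendsto_Jcheck) auto
  qed
  then show ?thesis by simp
qed

end

theorem proposition4:
  fixes eps :: real and T :: nat
    and A :: "nat \<Rightarrow> real^'n^'n" and B :: "nat \<Rightarrow> real^'m^'n"
    and R :: "nat \<Rightarrow> real^'m^'m" and Sw :: "nat \<Rightarrow> real^'n^'n"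
    and F :: "real^'n^'n" and Sx :: "real^'n^'n"
  assumes "T \<ge> 1" and "eps > 0"
    and "\<And>k. k < T \<Longrightarrow> pd_mat (R k)"
    and "\<And>k. k < T \<Longrightarrow> pd_mat (Sw k)"
    and "pd_mat F" and "pd_mat Sx"
  shows "\<exists>Srho :: nat \<Rightarrow> real^'m^'m. (\<forall>k<T. psd_mat (Srho k)) \<and>
           (\<forall>Srho' :: nat \<Rightarrow> real^'m^'m. (\<forall>k<T. psd_mat (Srho' k)) \<longrightarrow>
              Jcheck eps A B R F Sw Sx T Srho \<le> Jcheck eps A B R F Sw Sx T Srho')"
proof -
  interpret entropic_cost eps A B R F T Sw Sx
    using assms(2-6) pd_imp_psd_mat by unfold_locales auto
  show ?thesis by (rule Jcheck_attains_min)
qed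

end
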